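(* Let $f$ be a non-imposing ABC voting rule that satisfies anonymity, neutrality, and consistency. Then there is a function $\hat g:\mathbb Q^{|\mathcal A|}\to 2^{\mathcal W_k}\setminus\{\emptyset\}$ that is neutral (i.e., $\hat g(\tau(v))=\{\tau(W):W\in\hat g(v)\}$ for all $v\in\mathbb Q^{|\mathcal A|}$ and all permutations $\tau$ of $\mathcal C$), consistent (i.e., $\hat g(v+v')=\hat g(v)\cap\hat g(v')$ for all $v,v'\in\mathbb Q^{|\mathcal A|}$ with $\hat g(v)\cap\hat g(v')\neq\emptyset$), and satisfies $\hat g(v(A))=f(A)$ for all profiles $A\in\mathcal A^*$.
   Context: Let $\mathcal C=\{c_1,\dots,c_m\}$ be a set of $m\ge 2$ candidates and $\mathbb N=\{1,2,\dots\}$ the set of potential voters. An approval ballot is a non-empty subset of $\mathcal C$; $\mathcal A$ is the set of all ballots. A profile is a map $A:N_A\to\mathcal A$ for a non-empty finite electorate $N_A\subseteq\mathbb N$; $\mathcal A^*$ is the set of all profiles; for disjoint electorates, $A+A'$ denotes the union profile. Fix $k\in\{1,\dots,m-1\}$; $\mathcal W_k$ is the set of $k$-element subsets of $\mathcal C$. An ABC voting rule is a map $f:\mathcal A^*\to 2^{\mathcal W_k}\setminus\{\emptyset\}$. Anonymity: $f(A)$ is invariant under renaming voters. Neutrality: $f(\tau(A))=\{\tau(W):W\in f(A)\}$ for every permutation $\tau$ of $\mathcal C$, where $\tau(A)_i=\tau(A_i)$. Consistency: $f(A+A')=f(A)\cap f(A')$ for disjoint $A,A'$ with $f(A)\cap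 f(A')\neq\emptyset$. $f$ is non-imposing if for every $W\in\mathcal W_k$ there is a profile $A$ with $f(A)=\{W\}$. Fix a bijection $B:\{1,\dots,|\mathcal A|\}\to\mathcal A$. For a profile $A$, $v(A)\in\mathbb N_0^{|\mathcal A|}$ is the vector whose $\ell$-th entry is the number of voters in $A$ with ballot $B(\ell)$. For a permutation $\tau$ of $\mathcal C$ and a vector $v$ (real entries allowed), $\tau(v)$ is defined by $\tau(v)_{\ell_1}=v_{\ell_2}$ whenever $B(\ell_1)=\tau(B(\ell_2))$. *)

theory Defs
  imports Complex_Main "HOL-Library.Cardinality"
begin

text \<open>Candidates are the elements of a finite type 'c. A profile is a partial map from
  voters (natural numbers) to ballots; its domain is the electorate N_A.\<close>

type_synonym 'c profile = "nat \<Rightarrow> 'c set option"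

definition ballots :: "'c set set" where
  "ballots = {S. S \<noteq> {}}"

definition is_profile :: "'c profile \<Rightarrow> bool" where
  "is_profile A \<longleftrightarrow> finite (dom A) \<and> dom A \<noteq> {} \<and> 0 \<notin> dom A \<and> ran A \<subseteq> ballots"

definition committees :: "nat \<Rightarrow> 'c set set" where
  "committees k = {W. card W = k}"

definition is_ABC_rule :: "nat \<Rightarrow> ('c profile \<Rightarrow> 'c set set) \<Rightarrow> bool" where
  "is_ABC_rule k f \<longleftrightarrow> (\<forall>A. is_profile A \<longrightarrow> f A \<noteq> {} \<and> f A \<subseteq> committees k)"

definition anonymous :: "('c profile \<Rightarrow> 'c set set) \<Rightarrow> bool" where
  "anonymous f \<longleftrightarrow> (\<forall>A \<pi>. is_profile A \<and> bij \<pi> \<and> is_profile (A \<circ> \<pi>) \<longrightarrow> f (A \<circ> \<pi>) = f A)"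

definition rename_profile :: "('c \<Rightarrow> 'c) \<Rightarrow> 'c profile \<Rightarrow> 'c profile" where
  "rename_profile \<tau> A = (\<lambda>i. map_option (image \<tau>) (A i))"

definition neutral :: "('c profile \<Rightarrow> 'c set set) \<Rightarrow> bool" where
  "neutral f \<longleftrightarrow> (\<forall>A \<tau>. is_profile A \<and> bij \<tau> \<longrightarrow> f (rename_profile \<tau> A) = image \<tau> ` f A)"

definition consistent :: "('c profile \<Rightarrow> 'c set set) \<Rightarrow> bool" where
  "consistent f \<longleftrightarrow> (\<forall>A A'. is_profile A \<and> is_profile A' \<and> dom A \<inter> dom A' = {}
      \<and> f A \<inter> f A' \<noteq> {} \<longrightarrow> f (A ++ A') = f A \<inter> f A')"

definition non_imposing :: "nat \<Rightarrow> ('c profile \<Rightarrow> 'c set set) \<Rightarrow> bool" where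
  "non_imposing k f \<longleftrightarrow> (\<forall>W \<in> committees k. \<exists>A. is_profile A \<and> f A = {W})"

text \<open>Vectors in Q^|A| are represented as functions indexed directly by ballots
  (instead of via a fixed bijection B); the value at the non-ballot {} is fixed to 0.\<close>

definition vecs :: "('c set \<Rightarrow> rat) set" where
  "vecs = {v. v {} = 0}"

definition vec_of :: "'c profile \<Rightarrow> ('c set \<Rightarrow> rat)" where
  "vec_of A = (\<lambda>S. if S = {} then 0 else of_nat (card {i \<in> dom A. A i = Some S}))"

definition perm_vec :: "('c \<Rightarrow> 'c) \<Rightarrow> ('c set \<Rightarrow> rat) \<Rightarrow> ('c set \<Rightarrow> rat)" where
  "perm_vec \<tau> v = (\<lambda>S. v (inv \<tau> ` S))"

end

theory Submission
  imports Defs "HOL-Library.Multiset" "HOL-Library.Function_Algebras" "HOL-Combinatorics.Permutations"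
begin

(* By anonymity, f(A) depends only on the vector v(A), so f induces a rule F on the count vectors,
  the nonzero vectors in N_0^|A|, and F inherits neutrality and consistency. The all-ones vector 1
  is fixed by every permutation of the candidates, so by neutrality F(1) is the set of all
  committees; consistency then makes F invariant under w |-> d w + n 1 for d >= 1. Every rational
  vector v is moved to a count vector by such a map, so g(v) := F(d v + n 1) is well defined, and
  g inherits neutrality and consistency from F. *)

section \<open>Anonymity and vote counts\<close>

lemma vec_of_eq_card:
  assumes "S \<noteq> {}"
  shows "vec_of A S = of_nat (card {i. A i = Some S})"
proof -
  have "{i \<in> dom A. A i = Some S} = {i. A i = Some S}" by auto
  then show ?thesis using assms by (simp add: vec_of_def)
qed

lemma profile_ballot_nonempty: "is_profile A \<Longrightarrow> A i = Some S \<Longrightarrow> S \<noteq> {}"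
  by (auto simp: is_profile_def ballots_def intro: ranI)

lemma count_image_mset_mset_set:
  "finite D \<Longrightarrow> count (image_mset f (mset_set D)) y = card {x \<in> D. f x = y}"
  by (simp add: count_conv_size_mset filter_mset_image_mset)

lemma vec_of_eq_imp_permutation:
  assumes A: "is_profile A" and B: "is_profile B" and eq: "vec_of A = vec_of B"
  obtains \<pi> where "bij \<pi>" and "A = B \<circ> \<pi>"
proof -
  define D where "D = dom A \<union> dom B"
  have "finite D" using A B by (simp add: D_def is_profile_def)
  let ?M = "\<lambda>C :: 'a profile. image_mset C (mset_set D)"
  have "card {i \<in> D. A i = Some S} = card {i \<in> D. B i = Some S}" for S
  proof (cases "S = {}")
    case True
    have "{i \<in> D. A i = Some S} = {}" "{i \<in> D. B i = Some S} = {}"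
      using profile_ballot_nonempty[OF A] profile_ballot_nonempty[OF B] True by blast+
    then show ?thesis by (simp only:)
  next
    case False
    have "{i \<in> D. C i = Some S} = {i. C i = Some S}" if "dom C \<subseteq> D" for C :: "'a profile"
      using that by auto
    then show ?thesis using fun_cong[OF eq, of S] False by (simp add: D_def vec_of_eq_card)
  qed
  then have counts: "count (?M A) y = count (?M B) y" if "y \<noteq> None" for y
    using that \<open>finite D\<close> by (auto simp: count_image_mset_mset_set)
  have "?M A = ?M B"
    \<comment> \<open>both multisets have size \<open>card D\<close>, so they also agree at \<open>None\<close>\<close>
  proof (rule ccontr)
    assume "?M A \<noteq> ?M B"
    moreover have "size (?M A) = size (?M B)" by simp
    ultimately obtain y y' where y: "count (?M A) y < count (?M B) y"
      and y': "count (?M B) y' < count (?M A) y'"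
      using size_eq_ex_count_lt by metis
    have "y = None" "y' = None" using y y' counts by force+
    then show False using y y' by simp
  qed
  then obtain \<pi> where \<pi>: "\<pi> permutes D" "\<forall>x\<in>D. A x = B (\<pi> x)"
    by (rule image_mset_eq_implies_permutes[OF \<open>finite D\<close>])
  have "A x = B (\<pi> x)" for x
  proof (cases "x \<in> D")
    case False
    then have "\<pi> x = x" "A x = None" "B x = None"
      using permutes_not_in[OF \<pi>(1)] by (auto simp: D_def)
    then show ?thesis by simp
  qed (use \<pi> in blast)
  then show thesis using that permutes_bij[OF \<pi>(1)] by (auto simp: fun_eq_iff)
qed

lemma anonymous_vec_of_eq:
  assumes "anonymous f" "is_profile A" "is_profile B" "vec_of A = vec_of B"
  shows "f A = f B"
proof -
  obtain \<pi> where "bij \<pi>" "A = B \<circ> \<pi>" using vec_of_eq_imp_permutation assms(2-4) .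
  then show ?thesis using assms(1-3) by (simp add: anonymous_def)
qed

lemma is_profile_rename_profile:
  assumes "is_profile A"
  shows "is_profile (rename_profile \<tau> A)"
proof -
  have "dom (rename_profile \<tau> A) = dom A" by (auto simp: rename_profile_def dom_def)
  moreover have "ran (rename_profile \<tau> A) = image \<tau> ` ran A"
    by (auto simp: rename_profile_def ran_def)
  ultimately show ?thesis using assms by (auto simp: is_profile_def ballots_def)
qed

lemma vec_of_rename_profile:
  assumes "bij \<tau>"
  shows "vec_of (rename_profile \<tau> A) = perm_vec \<tau> (vec_of A)"
proof
  fix S
  have "\<tau> ` T = S \<longleftrightarrow> T = inv \<tau> ` S" for T
    using assms by (metis bij_is_inj bij_is_surj image_f_inv_f image_inv_f_f)
  then have "{i. rename_profile \<tau> A i = Some S} = {i. A i = Some (inv \<tau> ` S)}"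
    by (auto simp: rename_profile_def)
  then show "vec_of (rename_profile \<tau> A) S = perm_vec \<tau> (vec_of A) S"
    by (cases "S = {}") (simp_all add: vec_of_eq_card perm_vec_def, simp add: vec_of_def)
qed

definition profile_of_list :: "nat \<Rightarrow> 'c set list \<Rightarrow> 'c profile" where
  "profile_of_list N L i = (if N < i \<and> i \<le> N + length L then Some (L ! (i - Suc N)) else None)"

lemma dom_profile_of_list: "dom (profile_of_list N L) = {N<..N + length L}"
  by (auto simp: profile_of_list_def dom_def)

lemma is_profile_profile_of_list:
  assumes "L \<noteq> []" "{} \<notin> set L"
  shows "is_profile (profile_of_list N L)"
proof -
  have "ran (profile_of_list N L) \<subseteq> set L"
    by (auto simp: ran_def profile_of_list_def split: if_splits)
  then show ?thesis
    using assms by (auto simp: is_profile_def dom_profile_of_list ballots_def)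
qed

lemma vec_of_profile_of_list:
  assumes "{} \<notin> set L"
  shows "vec_of (profile_of_list N L) = (\<lambda>S. of_nat (count (mset L) S))"
proof
  fix S
  have "{i. profile_of_list N L i = Some S} = (\<lambda>j. Suc (N + j)) ` {j. j < length L \<and> L ! j = S}"
  proof (intro set_eqI iffI)
    fix i assume "i \<in> {i. profile_of_list N L i = Some S}"
    then have "N < i" "i \<le> N + length L" "L ! (i - Suc N) = S"
      by (auto simp: profile_of_list_def split: if_splits)
    then show "i \<in> (\<lambda>j. Suc (N + j)) ` {j. j < length L \<and> L ! j = S}"
      by (intro image_eqI[of _ _ "i - Suc N"]) auto
  qed (auto simp: profile_of_list_def)
  then have "card {i. profile_of_list N L i = Some S} = count (mset L) S"
    by (simp add: card_image inj_on_def count_mset count_list_eq_length_filter length_filter_conv_card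
        eq_commute[of S])
  then show "vec_of (profile_of_list N L) S = of_nat (count (mset L) S)"
  proof (cases "S = {}")
    case True
    then have "count (mset L) S = 0" using assms by (simp add: count_mset_0_iff)
    then show ?thesis using True by (simp add: vec_of_def)
  qed (simp add: vec_of_eq_card)
qed

lemma profile_of_list_append:
  "profile_of_list N (L @ L') = profile_of_list N L ++ profile_of_list (N + length L) L'"
  by (auto simp: fun_eq_iff profile_of_list_def map_add_def nth_append split: option.splits)

section \<open>Count vectors\<close>

definition count_vec :: "('c set \<Rightarrow> rat) \<Rightarrow> bool" where
  "count_vec w \<longleftrightarrow> w {} = 0 \<and> (\<forall>S. w S \<in> \<nat>) \<and> w \<noteq> 0"

definition ones_vec :: "'c set \<Rightarrow> rat" where
  "ones_vec S = (if S = {} then 0 else 1)"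

lemma count_vec_vec_of:
  assumes "is_profile A"
  shows "count_vec (vec_of A)"
proof -
  obtain i where "i \<in> dom A" using assms unfolding is_profile_def by blast
  then obtain S where "A i = Some S" by auto
  moreover have "finite {i. A i = Some S}"
    using assms by (auto simp: is_profile_def intro: finite_subset[of _ "dom A"])
  ultimately have "vec_of A S \<noteq> 0"
    using profile_ballot_nonempty[OF assms] by (auto simp: vec_of_eq_card)
  then have "vec_of A \<noteq> 0" by (metis zero_fun_apply)
  moreover have "vec_of A {} = 0" and "\<forall>T. vec_of A T \<in> \<nat>" by (simp_all add: vec_of_def)
  ultimately show ?thesis by (simp add: count_vec_def)
qed

lemma count_vec_ones_vec: "count_vec ones_vec"
proof -
  have "ones_vec UNIV \<noteq> 0" by (simp add: ones_vec_def)
  then have "ones_vec \<noteq> 0" by (metis zero_fun_apply)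
  then show ?thesis by (simp add: count_vec_def ones_vec_def)
qed

lemma count_vec_add:
  assumes "count_vec w" and "w' {} = 0" and "\<forall>S. w' S \<in> \<nat>"
  shows "count_vec (w + w')"
proof -
  obtain S where "w S \<noteq> 0" using assms(1) by (auto simp: count_vec_def fun_eq_iff)
  moreover have "0 \<le> w S" "0 \<le> w' S" using assms by (auto simp: count_vec_def Nats_altdef2)
  ultimately have "(w + w') S \<noteq> 0" by simp
  then have "w + w' \<noteq> 0" by (metis zero_fun_apply)
  then show ?thesis using assms by (simp add: count_vec_def Nats_add)
qed

lemma count_vec_scale:
  assumes "count_vec w" and "1 \<le> d"
  shows "count_vec (of_nat d * w)"
proof -
  obtain S where "w S \<noteq> 0" using assms(1) by (auto simp: count_vec_def fun_eq_iff)
  then have "(of_nat d * w) S \<noteq> 0" using assms(2) by simp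
  then have "of_nat d * w \<noteq> 0" by (metis zero_fun_apply)
  then show ?thesis using assms by (simp add: count_vec_def Nats_mult)
qed

lemma count_vec_perm_vec:
  assumes "count_vec w" and "bij \<tau>"
  shows "count_vec (perm_vec \<tau> w)"
proof -
  obtain S where "w S \<noteq> 0" using assms(1) by (auto simp: count_vec_def fun_eq_iff)
  moreover have "inv \<tau> ` \<tau> ` S = S" using assms(2) by (simp add: bij_is_inj image_inv_f_f)
  ultimately have "perm_vec \<tau> w (\<tau> ` S) \<noteq> 0" by (simp add: perm_vec_def)
  then have "perm_vec \<tau> w \<noteq> 0" by (metis zero_fun_apply)
  moreover have "perm_vec \<tau> w {} = 0" and "\<forall>T. perm_vec \<tau> w T \<in> \<nat>"
    using assms(1) by (simp_all add: count_vec_def perm_vec_def)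
  ultimately show ?thesis by (simp add: count_vec_def)
qed

lemma count_vec_obtain_list:
  fixes w :: "'c::finite set \<Rightarrow> rat"
  assumes "count_vec w"
  obtains L where "L \<noteq> []" and "{} \<notin> set L" and "w = (\<lambda>S. of_nat (count (mset L) S))"
proof -
  obtain L where L: "mset L = Abs_multiset (\<lambda>S. nat \<lfloor>w S\<rfloor>)" using ex_mset by blast
  have "count (mset L) S = nat \<lfloor>w S\<rfloor>" for S
    unfolding L by (simp add: count_Abs_multiset)
  moreover have "of_nat (nat \<lfloor>w S\<rfloor>) = w S" for S
  proof -
    have "w S \<in> \<nat>" using assms by (simp add: count_vec_def)
    then show ?thesis by (auto elim: Nats_cases)
  qed
  ultimately have w: "w = (\<lambda>S. of_nat (count (mset L) S))" by auto
  have "L \<noteq> []" using assms by (auto simp: count_vec_def w zero_fun_def)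
  moreover have "{} \<notin> set L" using assms by (simp add: count_vec_def w flip: count_mset_0_iff)
  ultimately show thesis using that w by blast
qed

lemma perm_vec_add: "perm_vec \<tau> (w + w') = perm_vec \<tau> w + perm_vec \<tau> w'"
  by (simp add: perm_vec_def fun_eq_iff)

lemma perm_vec_scale: "perm_vec \<tau> (of_nat d * w) = of_nat d * perm_vec \<tau> w"
  by (simp add: perm_vec_def fun_eq_iff)

lemma perm_vec_ones_vec: "bij \<tau> \<Longrightarrow> perm_vec \<tau> ones_vec = ones_vec"
  by (auto simp: perm_vec_def ones_vec_def fun_eq_iff)

lemma count_vec_obtain_profile:
  fixes w :: "'c::finite set \<Rightarrow> rat"
  assumes "count_vec w"
  obtains A where "is_profile A" and "vec_of A = w"
proof -
  obtain L where "L \<noteq> []" "{} \<notin> set L" "w = (\<lambda>S. of_nat (count (mset L) S))"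
    using count_vec_obtain_list[OF assms] .
  then show thesis
    using that[of "profile_of_list 0 L"] by (simp add: is_profile_profile_of_list vec_of_profile_of_list)
qed

section \<open>Count vectors representing rational vectors\<close>

lemma ex_common_denominator:
  fixes v :: "'a::finite \<Rightarrow> rat"
  obtains d :: nat where "1 \<le> d" and "\<And>i. of_nat d * v i \<in> \<int>"
proof -
  define q where "q i = snd (quotient_of (v i))" for i
  have q_pos: "0 < q i" and q_int: "of_int (q i) * v i \<in> \<int>" for i
  proof -
    obtain p where pq: "quotient_of (v i) = (p, q i)" by (metis q_def prod.collapse)
    then show "0 < q i" by (rule quotient_of_denom_pos)
    moreover have "v i = of_int p / of_int (q i)" using pq by (rule quotient_of_div)
    ultimately show "of_int (q i) * v i \<in> \<int>" by simp
  qed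
  define d where "d = nat (\<Prod>i\<in>UNIV. q i)"
  have "0 < (\<Prod>i\<in>UNIV. q i)" by (rule prod_pos) (simp add: q_pos)
  then have "1 \<le> d" and d_eq: "of_nat d = (of_int (\<Prod>i\<in>UNIV. q i) :: rat)"
    by (simp_all add: d_def)
  moreover have "of_nat d * v i \<in> \<int>" for i
  proof -
    have "of_nat d = (of_int (\<Prod>j\<in>UNIV - {i}. q j) * of_int (q i) :: rat)"
      unfolding d_eq by (simp add: prod.remove[of UNIV i] mult.commute)
    then show ?thesis by (simp only: mult.assoc) (intro Ints_mult Ints_of_int q_int)
  qed
  ultimately show thesis using that by blast
qed

definition count_rep :: "('c set \<Rightarrow> rat) \<Rightarrow> ('c set \<Rightarrow> rat) \<Rightarrow> bool" where
  "count_rep v w \<longleftrightarrow> count_vec w \<and> (\<exists>d n. 1 \<le> d \<and> w = of_nat d * v + of_nat n * ones_vec)"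

lemma count_rep_exists:
  fixes v :: "'c::finite set \<Rightarrow> rat"
  assumes "v {} = 0"
  shows "\<exists>w. count_rep v w"
proof -
  obtain d :: nat where d: "1 \<le> d" and d_int: "\<And>S. of_nat d * v S \<in> \<int>"
    using ex_common_denominator[of v] by blast
  obtain n :: nat where n: "(\<Sum>S\<in>UNIV. \<bar>of_nat d * v S\<bar>) < of_nat n"
    using reals_Archimedean2 by blast
  define w where "w = of_nat d * v + of_nat n * ones_vec"
  have pos: "0 < w S" and nat: "w S \<in> \<nat>" if "S \<noteq> {}" for S
  proof -
    have "\<bar>of_nat d * v S\<bar> \<le> (\<Sum>S\<in>UNIV. \<bar>of_nat d * v S\<bar>)"
      by (rule member_le_sum) auto
    then show "0 < w S" using n that by (simp add: w_def ones_vec_def)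
    then show "w S \<in> \<nat>" using d_int[of S] that by (simp add: w_def ones_vec_def Nats_altdef2)
  qed
  have "w {} = 0" using assms by (simp add: w_def ones_vec_def)
  moreover have "\<forall>S. w S \<in> \<nat>" using nat \<open>w {} = 0\<close> by (metis Nats_0)
  moreover have "w \<noteq> 0" using pos[of UNIV] by (metis UNIV_not_empty less_irrefl zero_fun_apply)
  ultimately have "count_rep v w" using d unfolding count_rep_def count_vec_def w_def by blast
  then show ?thesis by blast
qed

lemma count_rep_vec_of: "is_profile A \<Longrightarrow> count_rep (vec_of A) (vec_of A)"
  unfolding count_rep_def
  by (intro conjI count_vec_vec_of exI[of _ "1::nat"] exI[of _ "0::nat"]) simp_all

lemma count_rep_perm_vec:
  assumes "count_rep v w" and "bij \<tau>"
  shows "count_rep (perm_vec \<tau> v) (perm_vec \<tau> w)"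
proof -
  obtain d n where "1 \<le> d" and w: "w = of_nat d * v + of_nat n * ones_vec"
    using assms(1) by (auto simp: count_rep_def)
  then have "perm_vec \<tau> w = of_nat d * perm_vec \<tau> v + of_nat n * ones_vec"
    using assms(2) by (simp add: perm_vec_add perm_vec_scale perm_vec_ones_vec)
  moreover have "count_vec (perm_vec \<tau> w)"
    using assms count_vec_perm_vec by (auto simp: count_rep_def)
  ultimately show ?thesis using \<open>1 \<le> d\<close> by (auto simp: count_rep_def)
qed

lemma count_rep_add:
  assumes "count_rep v w" and "count_rep v' w'"
  shows "\<exists>a b. 1 \<le> a \<and> 1 \<le> b \<and> count_rep (v + v') (of_nat a * w + of_nat b * w')"
proof -
  obtain d n where d: "1 \<le> d" and w: "w = of_nat d * v + of_nat n * ones_vec"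
    using assms(1) by (auto simp: count_rep_def)
  obtain d' n' where d': "1 \<le> d'" and w': "w' = of_nat d' * v' + of_nat n' * ones_vec"
    using assms(2) by (auto simp: count_rep_def)
  have eq: "of_nat d' * w + of_nat d * w'
      = of_nat (d * d') * (v + v') + of_nat (d' * n + d * n') * ones_vec"
    by (simp add: w w' algebra_simps)
  have "count_vec (of_nat d' * w + of_nat d * w')"
  proof (rule count_vec_add)
    show "count_vec (of_nat d' * w)" using assms(1) d' by (simp add: count_rep_def count_vec_scale)
    show "(of_nat d * w') {} = 0" and "\<forall>S. (of_nat d * w') S \<in> \<nat>"
      using assms(2) by (simp_all add: count_rep_def count_vec_def Nats_mult)
  qed
  then have "count_rep (v + v') (of_nat d' * w + of_nat d * w')"
    unfolding count_rep_def eq using d d'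
    by (intro conjI exI[of _ "d * d'"] exI[of _ "d' * n + d * n'"]) simp_all
  then show ?thesis using d d' by blast
qed

section \<open>The rule induced on count vectors and its extension\<close>

definition vec_rule :: "('c profile \<Rightarrow> 'c set set) \<Rightarrow> ('c set \<Rightarrow> rat) \<Rightarrow> 'c set set" where
  "vec_rule f w = f (SOME A. is_profile A \<and> vec_of A = w)"

lemma vec_rule_vec_of:
  assumes "anonymous f" and "is_profile A"
  shows "vec_rule f (vec_of A) = f A"
proof -
  let ?B = "SOME B. is_profile B \<and> vec_of B = vec_of A"
  have "is_profile ?B \<and> vec_of ?B = vec_of A" by (rule someI[of _ A]) (use assms(2) in simp)
  then show ?thesis unfolding vec_rule_def using anonymous_vec_of_eq assms by blast
qed

lemma ex_bij_image_eq:
  fixes W W' :: "'c::finite set"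
  assumes "card W = card W'"
  obtains \<tau> where "bij \<tau>" and "\<tau> ` W = W'"
proof -
  obtain h where h: "bij_betw h W W'"
    using finite_same_card_bij[OF finite finite assms] by blast
  have "card (- W) = card (- W')" using assms by (simp add: Compl_eq_Diff_UNIV card_Diff_subset)
  then obtain h' where h': "bij_betw h' (- W) (- W')"
    using finite_same_card_bij[OF finite finite] by blast
  define \<tau> where "\<tau> x = (if x \<in> W then h x else h' x)" for x
  have "bij_betw \<tau> (W \<union> - W) (W' \<union> - W')"
    unfolding \<tau>_def by (rule bij_betw_disjoint_Un[OF h h']) simp_all
  moreover have "\<tau> ` W = h ` W" by (simp add: \<tau>_def)
  ultimately show thesis using that h by (simp add: bij_betw_def)
qed

definition extended_rule :: "('c profile \<Rightarrow> 'c set set) \<Rightarrow> ('c set \<Rightarrow> rat) \<Rightarrow> 'c set set" where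
  "extended_rule f v = vec_rule f (SOME w. count_rep v w)"

locale anonymous_neutral_consistent_rule =
  fixes k :: nat and f :: "'c::finite profile \<Rightarrow> 'c set set"
  assumes ABC_rule: "is_ABC_rule k f"
    and anonymous: "anonymous f" and neutral: "neutral f" and consistent: "consistent f"
begin

lemma vec_rule_committees:
  assumes "count_vec w"
  shows "vec_rule f w \<noteq> {}" and "vec_rule f w \<subseteq> committees k"
proof -
  obtain A where "is_profile A" and "vec_of A = w" using count_vec_obtain_profile[OF assms] .
  then show "vec_rule f w \<noteq> {}" and "vec_rule f w \<subseteq> committees k"
    using ABC_rule vec_rule_vec_of[OF anonymous] unfolding is_ABC_rule_def by auto
qed

lemma vec_rule_perm_vec:
  assumes "count_vec w" and "bij \<tau>"
  shows "vec_rule f (perm_vec \<tau> w) = image \<tau> ` vec_rule f w"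
proof -
  obtain A where A: "is_profile A" and w: "vec_of A = w" using count_vec_obtain_profile[OF assms(1)] .
  have "vec_rule f (perm_vec \<tau> w) = vec_rule f (vec_of (rename_profile \<tau> A))"
    using vec_of_rename_profile[OF assms(2)] w by simp
  also have "\<dots> = f (rename_profile \<tau> A)"
    by (rule vec_rule_vec_of[OF anonymous is_profile_rename_profile[OF A]])
  also have "\<dots> = image \<tau> ` f A" using neutral A assms(2) by (simp add: neutral_def)
  finally show ?thesis using vec_rule_vec_of[OF anonymous A] w by simp
qed

lemma vec_rule_add:
  assumes "count_vec w" and "count_vec w'" and "vec_rule f w \<inter> vec_rule f w' \<noteq> {}"
  shows "vec_rule f (w + w') = vec_rule f w \<inter> vec_rule f w'"
proof -
  obtain L where L: "L \<noteq> []" "{} \<notin> set L" "w = (\<lambda>S. of_nat (count (mset L) S))"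
    using count_vec_obtain_list[OF assms(1)] .
  obtain L' where L': "L' \<noteq> []" "{} \<notin> set L'" "w' = (\<lambda>S. of_nat (count (mset L') S))"
    using count_vec_obtain_list[OF assms(2)] .
  define A where "A = profile_of_list 0 L"
  define A' where "A' = profile_of_list (length L) L'"
  have profiles: "is_profile A" "is_profile A'" "is_profile (A ++ A')"
    using L L' is_profile_profile_of_list[of "L @ L'" 0]
    by (simp_all add: A_def A'_def is_profile_profile_of_list profile_of_list_append)
  have vecs: "vec_of A = w" "vec_of A' = w'" "vec_of (A ++ A') = w + w'"
    using L L' vec_of_profile_of_list[of "L @ L'" 0]
    by (simp_all add: A_def A'_def vec_of_profile_of_list profile_of_list_append plus_fun_def)
  have rule_eqs: "vec_rule f w = f A" "vec_rule f w' = f A'" "vec_rule f (w + w') = f (A ++ A')"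
    using vec_rule_vec_of[OF anonymous] profiles vecs by metis+
  have "dom A \<inter> dom A' = {}" by (auto simp: A_def A'_def dom_profile_of_list)
  then show ?thesis
    using consistent profiles assms(3) unfolding consistent_def rule_eqs by blast
qed

lemma vec_rule_ones_vec: "vec_rule f ones_vec = committees k"
proof
  show "vec_rule f ones_vec \<subseteq> committees k" by (rule vec_rule_committees[OF count_vec_ones_vec])
  obtain W where W: "W \<in> vec_rule f ones_vec"
    using vec_rule_committees(1)[OF count_vec_ones_vec] by blast
  show "committees k \<subseteq> vec_rule f ones_vec"
  proof
    fix W' :: "'c set" assume "W' \<in> committees k"
    then have "card W = card W'"
      using W vec_rule_committees(2)[OF count_vec_ones_vec] by (auto simp: committees_def)
    then obtain \<tau> where \<tau>: "bij \<tau>" "\<tau> ` W = W'" by (rule ex_bij_image_eq)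
    have "vec_rule f ones_vec = image \<tau> ` vec_rule f ones_vec"
      using vec_rule_perm_vec[OF count_vec_ones_vec \<tau>(1)] perm_vec_ones_vec[OF \<tau>(1)] by simp
    then show "W' \<in> vec_rule f ones_vec" using W \<tau>(2) by blast
  qed
qed

lemma vec_rule_add_absorb:
  assumes "count_vec w" and "count_vec w'" and "vec_rule f w \<subseteq> vec_rule f w'"
  shows "vec_rule f (w + w') = vec_rule f w"
  using vec_rule_add[OF assms(1,2)] vec_rule_committees(1)[OF assms(1)] assms(3) by auto

lemma vec_rule_scale:
  assumes "count_vec w" and "1 \<le> d"
  shows "vec_rule f (of_nat d * w) = vec_rule f w"
  using assms(2)
proof (induction d rule: dec_induct)
  case (step d)
  have eq: "of_nat (Suc d) * w = of_nat d * w + w" by (simp add: algebra_simps)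
  have "vec_rule f (of_nat d * w + w) = vec_rule f (of_nat d * w)"
    by (rule vec_rule_add_absorb[OF count_vec_scale[OF assms(1) step.hyps(1)] assms(1)])
      (simp only: step.IH order_refl)
  then show ?case unfolding eq step.IH .
qed simp

lemma vec_rule_shift:
  assumes "count_vec w"
  shows "vec_rule f (w + of_nat n * ones_vec) = vec_rule f w"
proof (induction n)
  case (Suc n)
  have cv: "count_vec (w + of_nat n * ones_vec)"
    using assms by (rule count_vec_add) (simp_all add: ones_vec_def)
  have eq: "w + of_nat (Suc n) * ones_vec = (w + of_nat n * ones_vec) + ones_vec"
    by (simp add: algebra_simps)
  have "vec_rule f ((w + of_nat n * ones_vec) + ones_vec) = vec_rule f (w + of_nat n * ones_vec)"
    by (rule vec_rule_add_absorb[OF cv count_vec_ones_vec])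
      (simp only: vec_rule_ones_vec vec_rule_committees(2)[OF cv])
  then show ?case unfolding eq Suc.IH .
qed simp

lemma vec_rule_scale_shift:
  assumes "count_vec w" and "1 \<le> d"
  shows "vec_rule f (of_nat d * w + of_nat n * ones_vec) = vec_rule f w"
  using vec_rule_shift[OF count_vec_scale[OF assms]] vec_rule_scale[OF assms] by (rule trans)

lemma vec_rule_count_rep_eq:
  assumes "count_rep v w" and "count_rep v w'"
  shows "vec_rule f w = vec_rule f w'"
proof -
  obtain d n where d: "1 \<le> d" and w: "w = of_nat d * v + of_nat n * ones_vec"
    using assms(1) by (auto simp: count_rep_def)
  obtain d' n' where d': "1 \<le> d'" and w': "w' = of_nat d' * v + of_nat n' * ones_vec"
    using assms(2) by (auto simp: count_rep_def)
  have "count_vec w" "count_vec w'" using assms by (simp_all add: count_rep_def)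
  then have "vec_rule f (of_nat d' * w + of_nat (d * n') * ones_vec) = vec_rule f w"
    and "vec_rule f (of_nat d * w' + of_nat (d' * n) * ones_vec) = vec_rule f w'"
    using d d' by (simp_all only: vec_rule_scale_shift)
  moreover have "of_nat d' * w + of_nat (d * n') * ones_vec = of_nat d * w' + of_nat (d' * n) * ones_vec"
    by (simp add: w w' algebra_simps)
  ultimately show ?thesis by simp
qed

lemma extended_rule_eq: "count_rep v w \<Longrightarrow> extended_rule f v = vec_rule f w"
  unfolding extended_rule_def by (metis someI vec_rule_count_rep_eq)

lemma extended_rule_committees:
  assumes "count_rep v w"
  shows "extended_rule f v \<noteq> {}" and "extended_rule f v \<subseteq> committees k"
proof -
  have "count_vec w" using assms by (simp add: count_rep_def)
  then show "extended_rule f v \<noteq> {}" and "extended_rule f v \<subseteq> committees k"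
    unfolding extended_rule_eq[OF assms] by (rule vec_rule_committees)+
qed

lemma extended_rule_perm_vec:
  assumes "count_rep v w" and "bij \<tau>"
  shows "extended_rule f (perm_vec \<tau> v) = image \<tau> ` extended_rule f v"
proof -
  have "extended_rule f (perm_vec \<tau> v) = vec_rule f (perm_vec \<tau> w)"
    by (rule extended_rule_eq[OF count_rep_perm_vec[OF assms]])
  also have "\<dots> = image \<tau> ` vec_rule f w"
    using assms by (simp add: count_rep_def vec_rule_perm_vec)
  finally show ?thesis unfolding extended_rule_eq[OF assms(1)] .
qed

lemma extended_rule_add:
  assumes "count_rep v w" and "count_rep v' w'"
    and "extended_rule f v \<inter> extended_rule f v' \<noteq> {}"
  shows "extended_rule f (v + v') = extended_rule f v \<inter> extended_rule f v'"
proof -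
  obtain a b where "1 \<le> a" "1 \<le> b" and rep: "count_rep (v + v') (of_nat a * w + of_nat b * w')"
    using count_rep_add[OF assms(1,2)] by blast
  have w: "count_vec w" "count_vec w'" using assms(1,2) by (simp_all add: count_rep_def)
  then have "vec_rule f (of_nat a * w) = extended_rule f v"
    and "vec_rule f (of_nat b * w') = extended_rule f v'"
    using \<open>1 \<le> a\<close> \<open>1 \<le> b\<close> assms(1,2) by (simp_all add: vec_rule_scale extended_rule_eq)
  then show ?thesis
    using extended_rule_eq[OF rep] vec_rule_add[OF count_vec_scale count_vec_scale] w
      \<open>1 \<le> a\<close> \<open>1 \<le> b\<close> assms(3) by simp
qed

lemma extended_rule_vec_of: "is_profile A \<Longrightarrow> extended_rule f (vec_of A) = f A"
  using extended_rule_eq[OF count_rep_vec_of] vec_rule_vec_of[OF anonymous] by simp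

end

theorem mainTheorem7:
  fixes f :: "('c::finite) profile \<Rightarrow> 'c set set" and k :: nat
  assumes "CARD('c) \<ge> 2" and "1 \<le> k" and "k \<le> CARD('c) - 1"
    and "is_ABC_rule k f" and "non_imposing k f"
    and "anonymous f" and "neutral f" and "consistent f"
  shows "\<exists>g :: ('c set \<Rightarrow> rat) \<Rightarrow> 'c set set.
     (\<forall>v \<in> vecs. g v \<noteq> {} \<and> g v \<subseteq> committees k)
   \<and> (\<forall>v \<in> vecs. \<forall>\<tau>. bij \<tau> \<longrightarrow> g (perm_vec \<tau> v) = image \<tau> ` g v)
   \<and> (\<forall>v \<in> vecs. \<forall>v' \<in> vecs. g v \<inter> g v' \<noteq> {} \<longrightarrow> g (\<lambda>S. v S + v' S) = g v \<inter> g v')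
   \<and> (\<forall>A. is_profile A \<longrightarrow> g (vec_of A) = f A)"
proof -
  interpret anonymous_neutral_consistent_rule k f
    using assms(4,6-8) by unfold_locales
  have rep: "\<exists>w. count_rep v w" if "v \<in> vecs" for v :: "'c set \<Rightarrow> rat"
    using that count_rep_exists by (simp add: vecs_def)
  have plus: "(\<lambda>S. v S + v' S) = v + v'" for v v' :: "'c set \<Rightarrow> rat"
    by (simp add: plus_fun_def)
  have "\<forall>v \<in> vecs. extended_rule f v \<noteq> {} \<and> extended_rule f v \<subseteq> committees k"
    using rep extended_rule_committees by blast
  moreover have "\<forall>v \<in> vecs. \<forall>\<tau>. bij \<tau> \<longrightarrow>
      extended_rule f (perm_vec \<tau> v) = image \<tau> ` extended_rule f v"
    using rep extended_rule_perm_vec by blast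
  moreover have "\<forall>v \<in> vecs. \<forall>v' \<in> vecs. extended_rule f v \<inter> extended_rule f v' \<noteq> {} \<longrightarrow>
      extended_rule f (\<lambda>S. v S + v' S) = extended_rule f v \<inter> extended_rule f v'"
    unfolding plus using rep extended_rule_add by blast
  moreover have "\<forall>A. is_profile A \<longrightarrow> extended_rule f (vec_of A) = f A"
    using extended_rule_vec_of by blast
  ultimately show ?thesis by blast
qed

end
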